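(* Let $F_1,\dots,F_{m+1}$ be scalar (non-linear) differential operators in $m$ unknown functions of orders $l(1),\dots,l(m+1)$, belonging to a system $\mathcal E$ given by operators $F_1,\dots,F_r$, and put $l=\sum_{i=1}^{m+1}l(i)$. Define $$[F_1,\dots,F_{m+1}]=\frac1{m!}\sum_{\zeta\in S_{m+1},\ \nu\in S_m}\frac{\operatorname{sgn}(\zeta)}{\operatorname{sgn}(\nu)}\sum_{\substack{\tau_1,\dots,\tau_m\\|\tau_i|=l(\zeta(i))}}\prod_{j=1}^m\frac{\partial F_{\zeta(j)}}{\partial p^{\nu(j)}_{\tau_j}}\;D_{\tau_1+\dots+\tau_m}F_{\zeta(m+1)}.$$ Then $[F_1,\dots,F_{m+1}]\equiv\{F_1,\dots,F_{m+1}\}\mod\mathcal J_{l-1}(\mathcal E)$.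
   Context: Jet coordinates $(x^i,p^j_\sigma)$, $1\le i\le n$, $1\le j\le m$; total derivatives $D_i=\partial_{x^i}+\sum p^j_{\sigma+1_i}\partial_{p^j_\sigma}$, $D_\tau=D_1^{\tau_1}\cdots D_n^{\tau_n}$. A scalar non-linear operator of order $l$ is a smooth function on $J^l$. Linearization: $\ell_j(F)=\sum_\sigma\frac{\partial F}{\partial p^j_\sigma}D_\sigma$. Multi-bracket: $$\{F_1,\dots,F_{m+1}\}=\frac1{m!}\sum_{\alpha\in S_m,\beta\in S_{m+1}}(-1)^\alpha(-1)^\beta\ell_{\alpha(1)}(F_{\beta(1)})\circ\cdots\circ\ell_{\alpha(m)}(F_{\beta(m)})(F_{\beta(m+1)}).$$ $\mathcal J_s(\mathcal E)$ is the set of functions $\sum a_{i,\tau}D_\tau F_i$ (over $1\le i\le r$ and $\tau$ with $\operatorname{ord}F_i+|\tau|\le s$) with smooth coefficients $a_{i,\tau}$ on the jet space. *)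

theory Defs
  imports "HOL-Analysis.Analysis"
begin

text \<open>Jet coordinates: X i is x^(i+1) (0-based, i < n); P j s is p^(j+1)_s
  where s :: nat => nat is a multi-index (supported in {0..<n}), j < m.\<close>

datatype coord = X nat | P nat "nat \<Rightarrow> nat"

type_synonym jetpt = "coord \<Rightarrow> real"
type_synonym jetfun = "jetpt \<Rightarrow> real"

definition midx :: "nat \<Rightarrow> (nat \<Rightarrow> nat) \<Rightarrow> bool" where
  "midx n s \<longleftrightarrow> (\<forall>i\<ge>n. s i = 0)"

definition mabs :: "nat \<Rightarrow> (nat \<Rightarrow> nat) \<Rightarrow> nat" where
  "mabs n s = (\<Sum>i<n. s i)"

definition valid_coord :: "nat \<Rightarrow> nat \<Rightarrow> nat \<Rightarrow> coord \<Rightarrow> bool" where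
  "valid_coord n m l c = (case c of X i \<Rightarrow> i < n
                         | P j s \<Rightarrow> j < m \<and> midx n s \<and> mabs n s \<le> l)"

text \<open>F is a function on J^l: it depends only on the coordinates of J^l.\<close>
definition has_order_le :: "nat \<Rightarrow> nat \<Rightarrow> nat \<Rightarrow> jetfun \<Rightarrow> bool" where
  "has_order_le n m l F \<longleftrightarrow>
     (\<forall>u v. (\<forall>c. valid_coord n m l c \<longrightarrow> u c = v c) \<longrightarrow> F u = F v)"

definition jet_order :: "nat \<Rightarrow> nat \<Rightarrow> jetfun \<Rightarrow> nat" where
  "jet_order n m F = (LEAST l. has_order_le n m l F)"

definition pd :: "coord \<Rightarrow> jetfun \<Rightarrow> jetfun" where
  "pd c F = (\<lambda>u. deriv (\<lambda>t. F (u(c := t))) (u c))"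

definition pds :: "coord list \<Rightarrow> jetfun \<Rightarrow> jetfun" where
  "pds cs F = foldr pd cs F"

definition smooth_jet :: "nat \<Rightarrow> nat \<Rightarrow> jetfun \<Rightarrow> bool" where
  "smooth_jet n m F \<longleftrightarrow> (\<exists>l. has_order_le n m l F)
     \<and> (\<forall>cs c u. (\<lambda>t. pds cs F (u(c := t))) differentiable (at (u c)))
     \<and> (\<forall>cs. continuous_on UNIV (pds cs F))"

text \<open>Total derivative D_i (0-based i).\<close>
definition Dtot :: "nat \<Rightarrow> nat \<Rightarrow> nat \<Rightarrow> jetfun \<Rightarrow> jetfun" where
  "Dtot n m i F = (\<lambda>u. pd (X i) F u +
     (\<Sum>(j, s) \<in> {(j, s). j < m \<and> midx n s \<and> mabs n s \<le> jet_order n m F}.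
         u (P j (s(i := Suc (s i)))) * pd (P j s) F u))"

definition Dmulti :: "nat \<Rightarrow> nat \<Rightarrow> (nat \<Rightarrow> nat) \<Rightarrow> jetfun \<Rightarrow> jetfun" where
  "Dmulti n m t F = foldr (\<lambda>i G. (Dtot n m i ^^ t i) G) [0..<n] F"

definition ell :: "nat \<Rightarrow> nat \<Rightarrow> nat \<Rightarrow> jetfun \<Rightarrow> jetfun \<Rightarrow> jetfun" where
  "ell n m j F G = (\<lambda>u. \<Sum>s \<in> {s. midx n s \<and> mabs n s \<le> jet_order n m F}.
                          pd (P j s) F u * Dmulti n m s G u)"

text \<open>Multi-bracket {F_1,...,F_{m+1}} (F indexed 0..m).\<close>
definition multibracket :: "nat \<Rightarrow> nat \<Rightarrow> (nat \<Rightarrow> jetfun) \<Rightarrow> jetfun" where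
  "multibracket n m F = (\<lambda>u. (1 / fact m) *
     (\<Sum>\<alpha> \<in> {\<alpha>. \<alpha> permutes {..<m}}. \<Sum>\<beta> \<in> {\<beta>. \<beta> permutes {..<Suc m}}.
        of_int (sign \<alpha> * sign \<beta>) *
        foldr (\<lambda>k G. ell n m (\<alpha> k) (F (\<beta> k)) G) [0..<m] (F (\<beta> m)) u))"

definition lead_bracket :: "nat \<Rightarrow> nat \<Rightarrow> (nat \<Rightarrow> jetfun) \<Rightarrow> jetfun" where
  "lead_bracket n m F = (\<lambda>u. (1 / fact m) *
     (\<Sum>\<zeta> \<in> {\<zeta>. \<zeta> permutes {..<Suc m}}. \<Sum>\<nu> \<in> {\<nu>. \<nu> permutes {..<m}}.
        (of_int (sign \<zeta>) / of_int (sign \<nu>)) *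
        (\<Sum>ts \<in> PiE {..<m} (\<lambda>k. {s. midx n s \<and> mabs n s = jet_order n m (F (\<zeta> k))}).
           (\<Prod>j<m. pd (P (\<nu> j) (ts j)) (F (\<zeta> j)) u) *
           Dmulti n m (\<lambda>i. \<Sum>k<m. ts k i) (F (\<zeta> m)) u)))"

text \<open>J_s(E) for the system E given by F 0, ..., F (r-1); s is an integer so that
  J_{-1} = {0}.\<close>
definition Jideal :: "nat \<Rightarrow> nat \<Rightarrow> nat \<Rightarrow> (nat \<Rightarrow> jetfun) \<Rightarrow> int \<Rightarrow> jetfun set" where
  "Jideal n m r F s = {G. \<exists>a. (\<forall>i t. smooth_jet n m (a i t)) \<and>
     G = (\<lambda>u. \<Sum>i<r. \<Sum>t \<in> {t. midx n t \<and> int (jet_order n m (F i) + mabs n t) \<le> s}.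
                a i t u * Dmulti n m t (F i) u)}"

end

theory Submission
  imports Defs
begin

text \<open>
  The key observation is that, modulo \<open>\<J>\<^bsub>k-1\<^esub>\<close>
  for \<open>k = ord F\<^sub>i + |T| + |s|\<close>, one has \<open>D\<^sub>s (c \<cdot> D\<^sub>T F\<^sub>i) \<equiv> c \<cdot> D\<^bsub>T+s\<^esub> F\<^sub>i\<close>: every
  derivative that falls on the coefficient \<open>c\<close> leaves a term of lower order in \<open>F\<^sub>i\<close>.
  This needs the total derivatives to commute, which rests on the symmetry of second partial
  derivatives. Hence, modulo lower order, \<open>\<ell>\<^sub>j(A)\<close> acts on \<open>c \<cdot> D\<^sub>T F\<^sub>i\<close> only through its
  top coefficients \<open>\<partial>A/\<partial>p\<^sup>j\<^sub>s\<close> with \<open>|s| = ord A\<close>, and the orders add up. Applying this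
  \<open>m\<close> times turns each summand of \<open>{F\<^sub>1,\<dots>,F\<^bsub>m+1\<^esub>}\<close> into the corresponding summand of
  \<open>[F\<^sub>1,\<dots>,F\<^bsub>m+1\<^esub>]\<close> up to an element of \<open>\<J>\<^bsub>l-1\<^esub>(\<E>)\<close>.
\<close>

definition partially_differentiable :: "jetfun \<Rightarrow> bool" where
  "partially_differentiable g \<longleftrightarrow> (\<forall>c u. (\<lambda>t. g (u(c := t))) differentiable (at (u c)))"

lemma pd_has_real_derivative:
  "partially_differentiable g \<Longrightarrow> ((\<lambda>t. g (u(c := t))) has_real_derivative pd c g u) (at (u c))"
  unfolding partially_differentiable_def pd_def using DERIV_deriv_iff_real_differentiable by blast

lemma pd_has_real_derivative_at:
  "partially_differentiable g \<Longrightarrow> ((\<lambda>t. g (u(c := t))) has_real_derivative pd c g (u(c := x))) (at x)"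
  using pd_has_real_derivative[of g "u(c := x)" c] by simp

lemma partially_differentiableI:
  "(\<And>c u. \<exists>D. ((\<lambda>t. g (u(c := t))) has_real_derivative D) (at (u c))) \<Longrightarrow> partially_differentiable g"
  unfolding partially_differentiable_def real_differentiable_def by blast

lemma pd_eqI: "((\<lambda>t. g (u(c := t))) has_real_derivative D) (at (u c)) \<Longrightarrow> pd c g u = D"
  by (simp add: pd_def DERIV_imp_deriv)

lemma pd_const: "pd c (\<lambda>u. a) = (\<lambda>u. 0)"
  by (rule ext, rule pd_eqI, simp)

lemma pd_coord: "pd c (\<lambda>u. u c') = (\<lambda>u. if c = c' then 1 else 0)"
proof (rule ext, rule pd_eqI)
  fix u
  show "((\<lambda>t. (u(c := t)) c') has_real_derivative (if c = c' then 1 else 0)) (at (u c))"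
    by (cases "c = c'") auto
qed

lemma pd_add:
  "partially_differentiable f \<Longrightarrow> partially_differentiable g \<Longrightarrow>
     pd c (\<lambda>u. f u + g u) = (\<lambda>u. pd c f u + pd c g u)"
  by (rule ext, rule pd_eqI, intro DERIV_add pd_has_real_derivative)

lemma pd_mult:
  "partially_differentiable f \<Longrightarrow> partially_differentiable g \<Longrightarrow>
     pd c (\<lambda>u. f u * g u) = (\<lambda>u. pd c f u * g u + f u * pd c g u)"
  by (rule ext, rule pd_eqI, rule DERIV_mult[THEN DERIV_cong])
    (auto intro: pd_has_real_derivative)

lemma partially_differentiable_const: "partially_differentiable (\<lambda>u. a)"
  by (rule partially_differentiableI, rule exI, rule DERIV_const)

lemma partially_differentiable_coord: "partially_differentiable (\<lambda>u. u c')"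
proof (rule partially_differentiableI)
  fix c u
  show "\<exists>D. ((\<lambda>t. (u(c := t)) c') has_real_derivative D) (at (u c))"
  proof (cases "c = c'")
    case True
    then show ?thesis by (auto intro!: exI[of _ 1] DERIV_ident)
  next
    case False
    then show ?thesis by (auto intro!: exI[of _ 0])
  qed
qed

lemma partially_differentiable_add:
  assumes "partially_differentiable f" "partially_differentiable g"
  shows "partially_differentiable (\<lambda>u. f u + g u)"
proof (rule partially_differentiableI)
  fix c u
  show "\<exists>D. ((\<lambda>t. f (u(c := t)) + g (u(c := t))) has_real_derivative D) (at (u c))"
    using DERIV_add[OF pd_has_real_derivative[OF assms(1), of u c]
        pd_has_real_derivative[OF assms(2), of u c]]
    by blast
qed

lemma partially_differentiable_mult:
  assumes "partially_differentiable f" "partially_differentiable g"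
  shows "partially_differentiable (\<lambda>u. f u * g u)"
proof (rule partially_differentiableI)
  fix c u
  show "\<exists>D. ((\<lambda>t. f (u(c := t)) * g (u(c := t))) has_real_derivative D) (at (u c))"
    using DERIV_mult[OF pd_has_real_derivative[OF assms(1), of u c]
        pd_has_real_derivative[OF assms(2), of u c]]
    by blast
qed

lemma partially_differentiable_sum:
  "finite S \<Longrightarrow> (\<And>x. x \<in> S \<Longrightarrow> partially_differentiable (f x)) \<Longrightarrow>
     partially_differentiable (\<lambda>u. \<Sum>x\<in>S. f x u)"
  by (induction S rule: finite_induct)
    (auto intro: partially_differentiable_add partially_differentiable_const)

lemma pd_sum:
  "finite S \<Longrightarrow> (\<And>x. x \<in> S \<Longrightarrow> partially_differentiable (f x)) \<Longrightarrow>
     pd c (\<lambda>u. \<Sum>x\<in>S. f x u) = (\<lambda>u. \<Sum>x\<in>S. pd c (f x) u)"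
  by (induction S rule: finite_induct) (simp_all add: pd_const pd_add partially_differentiable_sum)

lemma pds_Nil [simp]: "pds [] g = g"
  by (simp add: pds_def)

lemma pds_Cons [simp]: "pds (c # cs) g = pd c (pds cs g)"
  by (simp add: pds_def)

lemma pds_snoc: "pds (cs @ [c]) g = pds cs (pd c g)"
  by (simp add: pds_def)

definition smooth_upto :: "nat \<Rightarrow> jetfun \<Rightarrow> bool" where
  "smooth_upto k g \<longleftrightarrow>
     (\<forall>cs. length cs \<le> k \<longrightarrow> partially_differentiable (pds cs g) \<and> continuous_on UNIV (pds cs g))"

definition smooth :: "jetfun \<Rightarrow> bool" where
  "smooth g \<longleftrightarrow> (\<forall>cs. partially_differentiable (pds cs g) \<and> continuous_on UNIV (pds cs g))"

lemma smooth_iff_smooth_upto: "smooth g \<longleftrightarrow> (\<forall>k. smooth_upto k g)"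
  unfolding smooth_def smooth_upto_def by blast

lemma smooth_upto_mono: "smooth_upto k' g \<Longrightarrow> k \<le> k' \<Longrightarrow> smooth_upto k g"
  unfolding smooth_upto_def by auto

lemma smooth_upto_0: "smooth_upto 0 g \<longleftrightarrow> partially_differentiable g \<and> continuous_on UNIV g"
  by (simp add: smooth_upto_def)

lemma smooth_upto_partially_differentiable: "smooth_upto k g \<Longrightarrow> partially_differentiable g"
  using smooth_upto_mono[of k g 0] by (simp add: smooth_upto_0)

lemma smooth_upto_pd: "smooth_upto (Suc k) g \<Longrightarrow> smooth_upto k (pd c g)"
  unfolding smooth_upto_def by (metis pds_snoc length_append_singleton not_less_eq_eq)

lemma pds_add:
  "smooth_upto k f \<Longrightarrow> smooth_upto k g \<Longrightarrow> length cs \<le> k \<Longrightarrow>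
     pds cs (\<lambda>u. f u + g u) = (\<lambda>u. pds cs f u + pds cs g u)"
proof (induction cs)
  case Nil
  then show ?case by simp
next
  case (Cons c cs)
  then have "partially_differentiable (pds cs f)" "partially_differentiable (pds cs g)"
    unfolding smooth_upto_def by auto
  with Cons show ?case by (simp add: pd_add)
qed

lemma smooth_upto_add: "smooth_upto k f \<Longrightarrow> smooth_upto k g \<Longrightarrow> smooth_upto k (\<lambda>u. f u + g u)"
  unfolding smooth_upto_def[of k "\<lambda>u. f u + g u"]
  by (auto simp: pds_add intro!: partially_differentiable_add continuous_on_add)
    (auto simp: smooth_upto_def)

lemma smooth_upto_mult: "smooth_upto k f \<Longrightarrow> smooth_upto k g \<Longrightarrow> smooth_upto k (\<lambda>u. f u * g u)"
proof (induction k arbitrary: f g)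
  case 0
  then show ?case by (simp add: smooth_upto_0 partially_differentiable_mult continuous_on_mult)
next
  case (Suc k)
  show ?case unfolding smooth_upto_def
  proof (intro allI impI)
    fix cs :: "coord list"
    assume len: "length cs \<le> Suc k"
    show "partially_differentiable (pds cs (\<lambda>u. f u * g u)) \<and>
        continuous_on UNIV (pds cs (\<lambda>u. f u * g u))"
    proof (cases cs rule: rev_exhaust)
      case Nil
      have "smooth_upto 0 f" "smooth_upto 0 g" using Suc.prems by (auto intro: smooth_upto_mono)
      with Nil show ?thesis by (simp add: smooth_upto_0 partially_differentiable_mult continuous_on_mult)
    next
      case (snoc cs' c)
      have "smooth_upto k (\<lambda>u. pd c f u * g u + f u * pd c g u)"
        using Suc.prems
        by (intro smooth_upto_add Suc.IH) (auto intro: smooth_upto_pd smooth_upto_mono)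
      moreover have "pds cs (\<lambda>u. f u * g u) = pds cs' (\<lambda>u. pd c f u * g u + f u * pd c g u)"
        using snoc Suc.prems by (simp add: pds_snoc pd_mult smooth_upto_partially_differentiable)
      ultimately show ?thesis
        using len snoc unfolding smooth_upto_def by auto
    qed
  qed
qed

lemma pds_const: "\<exists>b. pds cs (\<lambda>u. a) = (\<lambda>u. b)"
  by (induction cs) (auto simp: pd_const)

lemma pds_coord: "pds cs (\<lambda>u. u c) = (\<lambda>u. u c) \<or> (\<exists>b. pds cs (\<lambda>u. u c) = (\<lambda>u. b))"
  by (induction cs) (auto simp: pd_coord pd_const)

lemma smooth_const: "smooth (\<lambda>u. a)"
  unfolding smooth_def
proof
  fix cs
  obtain b where "pds cs (\<lambda>u. a) = (\<lambda>u. b)" using pds_const by blast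
  then show "partially_differentiable (pds cs (\<lambda>u. a)) \<and> continuous_on UNIV (pds cs (\<lambda>u. a))"
    by (simp add: partially_differentiable_const)
qed

lemma smooth_coord: "smooth (\<lambda>u. u c)"
  unfolding smooth_def
proof
  fix cs
  show "partially_differentiable (pds cs (\<lambda>u. u c)) \<and> continuous_on UNIV (pds cs (\<lambda>u. u c))"
  proof (cases "pds cs (\<lambda>u. u c) = (\<lambda>u. u c)")
    case True
    then show ?thesis by (simp add: partially_differentiable_coord)
  next
    case False
    then obtain b where "pds cs (\<lambda>u. u c) = (\<lambda>u. b)" using pds_coord by blast
    then show ?thesis by (simp add: partially_differentiable_const)
  qed
qed

lemma smooth_add: "smooth f \<Longrightarrow> smooth g \<Longrightarrow> smooth (\<lambda>u. f u + g u)"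
  by (simp add: smooth_iff_smooth_upto smooth_upto_add)

lemma smooth_mult: "smooth f \<Longrightarrow> smooth g \<Longrightarrow> smooth (\<lambda>u. f u * g u)"
  by (simp add: smooth_iff_smooth_upto smooth_upto_mult)

lemma smooth_pd: "smooth f \<Longrightarrow> smooth (pd c f)"
  by (simp add: smooth_iff_smooth_upto smooth_upto_pd)

lemma smooth_partially_differentiable: "smooth f \<Longrightarrow> partially_differentiable f"
  by (metis smooth_def pds_Nil)

lemma valid_coord_mono: "valid_coord n m l c \<Longrightarrow> l \<le> l' \<Longrightarrow> valid_coord n m l' c"
  by (auto simp: valid_coord_def split: coord.splits)

lemma has_order_le_mono: "has_order_le n m l F \<Longrightarrow> l \<le> l' \<Longrightarrow> has_order_le n m l' F"
  unfolding has_order_le_def by (meson valid_coord_mono)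

lemma has_order_le_add:
  "has_order_le n m l f \<Longrightarrow> has_order_le n m l g \<Longrightarrow> has_order_le n m l (\<lambda>u. f u + g u)"
  unfolding has_order_le_def by metis

lemma has_order_le_mult:
  "has_order_le n m l f \<Longrightarrow> has_order_le n m l g \<Longrightarrow> has_order_le n m l (\<lambda>u. f u * g u)"
  unfolding has_order_le_def by metis

lemma has_order_le_const: "has_order_le n m l (\<lambda>u. a)"
  unfolding has_order_le_def by simp

lemma has_order_le_coord: "valid_coord n m l c \<Longrightarrow> has_order_le n m l (\<lambda>u. u c)"
  unfolding has_order_le_def by simp

lemma has_order_le_sum:
  "(\<And>x. x \<in> S \<Longrightarrow> has_order_le n m l (f x)) \<Longrightarrow> has_order_le n m l (\<lambda>u. \<Sum>x\<in>S. f x u)"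
  unfolding has_order_le_def by (metis (mono_tags, lifting) sum.cong)

lemma pd_eq_0_if_not_valid_coord:
  assumes "has_order_le n m l F" "\<not> valid_coord n m l c"
  shows "pd c F u = 0"
proof -
  have "(\<lambda>t. F (u(c := t))) = (\<lambda>t. F u)"
    using assms unfolding has_order_le_def by (intro ext) (metis fun_upd_other)
  then show ?thesis unfolding pd_def by simp
qed

lemma has_order_le_pd:
  assumes F: "has_order_le n m l F"
  shows "has_order_le n m l (pd c F)"
proof (cases "valid_coord n m l c")
  case True
  show ?thesis unfolding has_order_le_def
  proof (intro allI impI)
    fix u v :: jetpt
    assume uv: "\<forall>c. valid_coord n m l c \<longrightarrow> u c = v c"
    have "(\<lambda>t. F (u(c := t))) = (\<lambda>t. F (v(c := t)))"
      using F uv unfolding has_order_le_def by (intro ext) (metis fun_upd_apply)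
    moreover have "u c = v c" using uv True by blast
    ultimately show "pd c F u = pd c F v" unfolding pd_def by simp
  qed
next
  case False
  then show ?thesis using pd_eq_0_if_not_valid_coord[OF F] unfolding has_order_le_def by simp
qed

lemma has_order_le_jet_order: "has_order_le n m l F \<Longrightarrow> has_order_le n m (jet_order n m F) F"
  unfolding jet_order_def by (rule LeastI)

lemma jet_order_le: "has_order_le n m l F \<Longrightarrow> jet_order n m F \<le> l"
  unfolding jet_order_def by (rule Least_le)

lemma smooth_jet_iff: "smooth_jet n m F \<longleftrightarrow> (\<exists>l. has_order_le n m l F) \<and> smooth F"
  unfolding smooth_jet_def smooth_def partially_differentiable_def by blast

lemma smooth_jet_smooth: "smooth_jet n m F \<Longrightarrow> smooth F"
  by (simp add: smooth_jet_iff)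

lemma smooth_jet_partially_differentiable: "smooth_jet n m F \<Longrightarrow> partially_differentiable F"
  by (simp add: smooth_jet_iff smooth_partially_differentiable)

lemma smooth_jet_has_order_le: "smooth_jet n m F \<Longrightarrow> has_order_le n m (jet_order n m F) F"
  using has_order_le_jet_order smooth_jet_iff by blast

lemma smooth_jet_common_order:
  "smooth_jet n m f \<Longrightarrow> smooth_jet n m g \<Longrightarrow> \<exists>N. has_order_le n m N f \<and> has_order_le n m N g"
  unfolding smooth_jet_iff by (metis has_order_le_mono max.cobounded1 max.cobounded2)

lemma smooth_jet_add:
  assumes "smooth_jet n m f" "smooth_jet n m g"
  shows "smooth_jet n m (\<lambda>u. f u + g u)"
proof -
  obtain N where "has_order_le n m N f" "has_order_le n m N g"
    using smooth_jet_common_order[OF assms] by blast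
  with assms show ?thesis by (auto simp: smooth_jet_iff intro: has_order_le_add smooth_add)
qed

lemma smooth_jet_mult:
  assumes "smooth_jet n m f" "smooth_jet n m g"
  shows "smooth_jet n m (\<lambda>u. f u * g u)"
proof -
  obtain N where "has_order_le n m N f" "has_order_le n m N g"
    using smooth_jet_common_order[OF assms] by blast
  with assms show ?thesis by (auto simp: smooth_jet_iff intro: has_order_le_mult smooth_mult)
qed

lemma smooth_jet_const: "smooth_jet n m (\<lambda>u. a)"
  unfolding smooth_jet_iff using has_order_le_const smooth_const by blast

lemma smooth_jet_coord: "valid_coord n m l c \<Longrightarrow> smooth_jet n m (\<lambda>u. u c)"
  unfolding smooth_jet_iff using has_order_le_coord smooth_coord by blast

lemma smooth_jet_pd: "smooth_jet n m f \<Longrightarrow> smooth_jet n m (pd c f)"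
  unfolding smooth_jet_iff using has_order_le_pd smooth_pd by blast

lemma smooth_jet_sum:
  "finite S \<Longrightarrow> (\<And>x. x \<in> S \<Longrightarrow> smooth_jet n m (f x)) \<Longrightarrow> smooth_jet n m (\<lambda>u. \<Sum>x\<in>S. f x u)"
  by (induction S rule: finite_induct) (auto intro: smooth_jet_add smooth_jet_const)

lemma smooth_jet_prod:
  "finite S \<Longrightarrow> (\<And>x. x \<in> S \<Longrightarrow> smooth_jet n m (f x)) \<Longrightarrow> smooth_jet n m (\<lambda>u. \<Prod>x\<in>S. f x u)"
  by (induction S rule: finite_induct) (auto intro: smooth_jet_mult smooth_jet_const)

definition incr :: "nat \<Rightarrow> (nat \<Rightarrow> nat) \<Rightarrow> nat \<Rightarrow> nat" where
  "incr i s = s(i := Suc (s i))"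

lemma incr_commute: "incr i (incr j s) = incr j (incr i s)"
  unfolding incr_def by (cases "i = j") (auto simp: fun_eq_iff)

lemma midx_incr: "i < n \<Longrightarrow> midx n s \<Longrightarrow> midx n (incr i s)"
  by (simp add: midx_def incr_def)

lemma mabs_incr: "i < n \<Longrightarrow> mabs n (incr i s) = Suc (mabs n s)"
proof -
  assume i: "i < n"
  have "mabs n (incr i s) = Suc (s i) + (\<Sum>k\<in>{..<n} - {i}. s k)"
    unfolding mabs_def incr_def using i by (subst sum.remove[of _ i]) auto
  also have "\<dots> = Suc (mabs n s)"
    unfolding mabs_def using i by (subst (2) sum.remove[of _ i]) auto
  finally show ?thesis .
qed

lemma mabs_add: "mabs n (\<lambda>i. s i + t i) = mabs n s + mabs n t"
  by (simp add: mabs_def sum.distrib)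

lemma finite_multi_indices: "finite {s. midx n s \<and> mabs n s \<le> N}"
proof (rule finite_subset)
  let ?ext = "\<lambda>f i. if i < n then f i else 0"
  show "{s. midx n s \<and> mabs n s \<le> N} \<subseteq> ?ext ` PiE {..<n} (\<lambda>_. {..N})"
  proof
    fix s
    assume "s \<in> {s. midx n s \<and> mabs n s \<le> N}"
    then have s: "\<forall>i\<ge>n. s i = 0" "(\<Sum>i<n. s i) \<le> N" by (auto simp: midx_def mabs_def)
    have "\<And>i. i < n \<Longrightarrow> s i \<le> (\<Sum>i<n. s i)" by (rule member_le_sum) auto
    with s(2) have "restrict s {..<n} \<in> PiE {..<n} (\<lambda>_. {..N})" by (auto intro: order_trans)
    moreover have "s = ?ext (restrict s {..<n})" using s(1) by (auto simp: fun_eq_iff)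
    ultimately show "s \<in> ?ext ` PiE {..<n} (\<lambda>_. {..N})" by blast
  qed
qed (simp add: finite_PiE)

lemma finite_multi_indices_eq: "finite {s. midx n s \<and> mabs n s = N}"
  by (rule finite_subset[OF _ finite_multi_indices[of n N]]) auto

lemma sum_PiE_insert:
  assumes "k \<notin> S"
  shows "(\<Sum>ts\<in>PiE (insert k S) T. f ts) = (\<Sum>g\<in>PiE S T. \<Sum>y\<in>T k. f (g(k := y)))"
proof -
  have "(\<Sum>ts\<in>PiE (insert k S) T. f ts) = (\<Sum>(y, g)\<in>T k \<times> PiE S T. f (g(k := y)))"
    unfolding PiE_insert_eq by (subst sum.reindex[OF inj_combinator[OF assms]]) (simp add: case_prod_unfold)
  also have "\<dots> = (\<Sum>g\<in>PiE S T. \<Sum>y\<in>T k. f (g(k := y)))"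
    by (simp add: sum.cartesian_product[symmetric]) (rule sum.swap)
  finally show ?thesis .
qed

lemma midx_mabs_sum_PiE:
  assumes "g \<in> PiE S (\<lambda>j. {s. midx n s \<and> mabs n s = d j})"
  shows "midx n (\<lambda>i. \<Sum>j\<in>S. g j i)" "mabs n (\<lambda>i. \<Sum>j\<in>S. g j i) = (\<Sum>j\<in>S. d j)"
proof -
  show "midx n (\<lambda>i. \<Sum>j\<in>S. g j i)"
    using assms unfolding midx_def by (auto simp: PiE_iff)
  have "mabs n (\<lambda>i. \<Sum>j\<in>S. g j i) = (\<Sum>j\<in>S. mabs n (g j))"
    unfolding mabs_def by (rule sum.swap)
  also have "\<dots> = (\<Sum>j\<in>S. d j)"
    using assms by (intro sum.cong) (auto simp: PiE_iff)
  finally show "mabs n (\<lambda>i. \<Sum>j\<in>S. g j i) = (\<Sum>j\<in>S. d j)" .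
qed

fun coord_incr :: "nat \<Rightarrow> coord \<Rightarrow> coord" where
  "coord_incr i (X k) = X k"
| "coord_incr i (P j s) = P j (incr i s)"

definition pcoords :: "nat \<Rightarrow> nat \<Rightarrow> nat \<Rightarrow> coord set" where
  "pcoords n m N = (\<lambda>(j, s). P j s) ` {(j, s). j < m \<and> midx n s \<and> mabs n s \<le> N}"

lemma finite_pcoords: "finite (pcoords n m N)"
proof -
  have "{(j, s). j < m \<and> midx n s \<and> mabs n s \<le> N} \<subseteq> {..<m} \<times> {s. midx n s \<and> mabs n s \<le> N}"
    by auto
  then have "finite {(j, s). j < m \<and> midx n s \<and> mabs n s \<le> N}"
    by (rule finite_subset) (simp add: finite_multi_indices)
  then show ?thesis unfolding pcoords_def by simp
qed

lemma pcoords_mono: "N \<le> N' \<Longrightarrow> pcoords n m N \<subseteq> pcoords n m N'"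
  by (auto simp: pcoords_def)

lemma valid_coord_pcoords: "c \<in> pcoords n m N \<longleftrightarrow> valid_coord n m N c \<and> (\<exists>j s. c = P j s)"
  by (auto simp: pcoords_def valid_coord_def split: coord.splits)

lemma coord_incr_pcoords:
  assumes i: "i < n" and c: "c \<in> pcoords n m N"
  shows "coord_incr i c \<in> pcoords n m (Suc N)"
proof -
  from c obtain j s where "c = P j s" "j < m" "midx n s" "mabs n s \<le> N"
    by (auto simp: pcoords_def)
  with i show ?thesis
    unfolding pcoords_def by (auto intro!: image_eqI[of _ _ "(j, incr i s)"] simp: midx_incr mabs_incr)
qed

lemma sum_pcoords:
  "(\<Sum>c\<in>pcoords n m N. g c) = (\<Sum>(j, s)\<in>{(j, s). j < m \<and> midx n s \<and> mabs n s \<le> N}. g (P j s))"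
  unfolding pcoords_def by (subst sum.reindex) (auto simp: inj_on_def case_prod_beta)

text \<open>\<^const>\<open>Dtot\<close> sums over the jet coordinates up to the order of its argument, which
  changes under sums and products; truncating at a common bound \<open>N\<close> instead makes linearity
  and the Leibniz rule plain computations.\<close>

definition Dtot_upto :: "nat \<Rightarrow> nat \<Rightarrow> nat \<Rightarrow> nat \<Rightarrow> jetfun \<Rightarrow> jetfun" where
  "Dtot_upto n m N i F =
     (\<lambda>u. pd (X i) F u + (\<Sum>c\<in>pcoords n m N. u (coord_incr i c) * pd c F u))"

lemma Dtot_eq_Dtot_upto_jet_order: "Dtot n m i F = Dtot_upto n m (jet_order n m F) i F"
  unfolding Dtot_def Dtot_upto_def sum_pcoords by (simp add: incr_def)

lemma Dtot_upto_mono: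
  assumes F: "has_order_le n m N F" and N: "N \<le> N'"
  shows "Dtot_upto n m N' i F = Dtot_upto n m N i F"
proof -
  have "pd c F u = 0" if "c \<in> pcoords n m N' - pcoords n m N" for c u
    using that by (intro pd_eq_0_if_not_valid_coord[OF F]) (auto simp: valid_coord_pcoords)
  then have "(\<Sum>c\<in>pcoords n m N'. u (coord_incr i c) * pd c F u)
      = (\<Sum>c\<in>pcoords n m N. u (coord_incr i c) * pd c F u)" for u
    by (intro sum.mono_neutral_right finite_pcoords pcoords_mono N) auto
  then show ?thesis unfolding Dtot_upto_def by simp
qed

lemma Dtot_eq_Dtot_upto: "has_order_le n m N F \<Longrightarrow> Dtot n m i F = Dtot_upto n m N i F"
  by (metis Dtot_eq_Dtot_upto_jet_order Dtot_upto_mono has_order_le_jet_order jet_order_le)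

lemma Dtot_upto_add:
  "partially_differentiable f \<Longrightarrow> partially_differentiable g \<Longrightarrow>
     Dtot_upto n m N i (\<lambda>u. f u + g u) = (\<lambda>u. Dtot_upto n m N i f u + Dtot_upto n m N i g u)"
  unfolding Dtot_upto_def pd_add by (simp add: algebra_simps sum.distrib)

lemma Dtot_upto_mult:
  "partially_differentiable f \<Longrightarrow> partially_differentiable g \<Longrightarrow>
     Dtot_upto n m N i (\<lambda>u. f u * g u) = (\<lambda>u. Dtot_upto n m N i f u * g u + f u * Dtot_upto n m N i g u)"
  unfolding Dtot_upto_def pd_mult
  by (simp add: algebra_simps sum.distrib sum_distrib_left sum_distrib_right)

lemma Dtot_const: "Dtot n m i (\<lambda>u. a) = (\<lambda>u. 0)"
  by (simp add: Dtot_eq_Dtot_upto_jet_order Dtot_upto_def pd_const)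

lemma Dtot_add:
  assumes "smooth_jet n m f" "smooth_jet n m g"
  shows "Dtot n m i (\<lambda>u. f u + g u) = (\<lambda>u. Dtot n m i f u + Dtot n m i g u)"
proof -
  obtain N where N: "has_order_le n m N f" "has_order_le n m N g"
    using smooth_jet_common_order[OF assms] by blast
  then show ?thesis
    using Dtot_upto_add[OF assms[THEN smooth_jet_partially_differentiable]]
    by (simp add: Dtot_eq_Dtot_upto[OF has_order_le_add[OF N]] Dtot_eq_Dtot_upto[OF N(1)]
        Dtot_eq_Dtot_upto[OF N(2)])
qed

lemma Dtot_mult:
  assumes "smooth_jet n m f" "smooth_jet n m g"
  shows "Dtot n m i (\<lambda>u. f u * g u) = (\<lambda>u. Dtot n m i f u * g u + f u * Dtot n m i g u)"
proof -
  obtain N where N: "has_order_le n m N f" "has_order_le n m N g"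
    using smooth_jet_common_order[OF assms] by blast
  then show ?thesis
    using Dtot_upto_mult[OF assms[THEN smooth_jet_partially_differentiable]]
    by (simp add: Dtot_eq_Dtot_upto[OF has_order_le_mult[OF N]] Dtot_eq_Dtot_upto[OF N(1)]
        Dtot_eq_Dtot_upto[OF N(2)])
qed

lemma Dtot_sum:
  "finite S \<Longrightarrow> (\<And>x. x \<in> S \<Longrightarrow> smooth_jet n m (f x)) \<Longrightarrow>
     Dtot n m i (\<lambda>u. \<Sum>x\<in>S. f x u) = (\<lambda>u. \<Sum>x\<in>S. Dtot n m i (f x) u)"
  by (induction S rule: finite_induct) (simp_all add: Dtot_const Dtot_add smooth_jet_sum)

lemma has_order_le_Dtot_upto:
  assumes i: "i < n" and F: "has_order_le n m N F"
  shows "has_order_le n m (Suc N) (Dtot_upto n m N i F)"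
proof -
  have "has_order_le n m (Suc N) (pd c F)" for c
    by (rule has_order_le_mono[OF has_order_le_pd[OF F]]) simp
  moreover have "has_order_le n m (Suc N) (\<lambda>u. u (coord_incr i c))" if "c \<in> pcoords n m N" for c
    using coord_incr_pcoords[OF i that] by (auto intro: has_order_le_coord simp: valid_coord_pcoords)
  ultimately show ?thesis
    unfolding Dtot_upto_def by (intro has_order_le_add has_order_le_sum has_order_le_mult) auto
qed

lemma has_order_le_Dtot:
  "i < n \<Longrightarrow> has_order_le n m N F \<Longrightarrow> has_order_le n m (Suc N) (Dtot n m i F)"
  by (simp add: Dtot_eq_Dtot_upto has_order_le_Dtot_upto)

lemma smooth_jet_Dtot:
  assumes i: "i < n" and F: "smooth_jet n m F"
  shows "smooth_jet n m (Dtot n m i F)"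
  unfolding Dtot_eq_Dtot_upto_jet_order Dtot_upto_def
proof (intro smooth_jet_add smooth_jet_sum finite_pcoords smooth_jet_mult smooth_jet_pd F)
  show "smooth_jet n m (\<lambda>u. u (coord_incr i c))" if "c \<in> pcoords n m (jet_order n m F)" for c
    using coord_incr_pcoords[OF i that] by (auto intro: smooth_jet_coord simp: valid_coord_pcoords)
qed

section \<open>Symmetry of second derivatives\<close>

lemma mixed_partials_mvt:
  fixes g gx gy gxy gyx :: "real \<Rightarrow> real \<Rightarrow> real"
  assumes dx: "\<And>x y. ((\<lambda>x. g x y) has_real_derivative gx x y) (at x)"
    and dy: "\<And>x y. ((\<lambda>y. g x y) has_real_derivative gy x y) (at y)"
    and dxy: "\<And>x y. ((\<lambda>y. gx x y) has_real_derivative gxy x y) (at y)"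
    and dyx: "\<And>x y. ((\<lambda>x. gy x y) has_real_derivative gyx x y) (at x)"
    and h: "h > 0"
  obtains a b c d where "x0 < a" "a < x0 + h" "y0 < b" "b < y0 + h"
    "x0 < c" "c < x0 + h" "y0 < d" "d < y0 + h" "gxy a b = gyx c d"
proof -
  obtain a where a: "x0 < a" "a < x0 + h"
    and ea: "(g (x0+h) (y0+h) - g (x0+h) y0) - (g x0 (y0+h) - g x0 y0) = h * (gx a (y0+h) - gx a y0)"
  proof -
    have "((\<lambda>x. g x (y0+h) - g x y0) has_real_derivative gx x (y0+h) - gx x y0) (at x)" for x
      by (intro DERIV_diff dx)
    then show ?thesis
      using MVT2[of x0 "x0+h" "\<lambda>x. g x (y0+h) - g x y0" "\<lambda>x. gx x (y0+h) - gx x y0"] h that by auto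
  qed
  obtain b where b: "y0 < b" "b < y0 + h" and eb: "gx a (y0+h) - gx a y0 = h * gxy a b"
    using MVT2[of y0 "y0+h" "\<lambda>y. gx a y" "\<lambda>y. gxy a y"] h dxy by auto
  obtain d where d: "y0 < d" "d < y0 + h"
    and ed: "(g (x0+h) (y0+h) - g x0 (y0+h)) - (g (x0+h) y0 - g x0 y0) = h * (gy (x0+h) d - gy x0 d)"
  proof -
    have "((\<lambda>y. g (x0+h) y - g x0 y) has_real_derivative gy (x0+h) y - gy x0 y) (at y)" for y
      by (intro DERIV_diff dy)
    then show ?thesis
      using MVT2[of y0 "y0+h" "\<lambda>y. g (x0+h) y - g x0 y" "\<lambda>y. gy (x0+h) y - gy x0 y"] h that by auto
  qed
  obtain c where c: "x0 < c" "c < x0 + h" and ec: "gy (x0+h) d - gy x0 d = h * gyx c d"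
    using MVT2[of x0 "x0+h" "\<lambda>x. gy x d" "\<lambda>x. gyx x d"] h dyx by auto
  have "h * (h * gxy a b) = h * (h * gyx c d)"
    using ea eb ed ec by (simp add: algebra_simps)
  with h a b c d that show ?thesis by simp
qed

lemma mixed_partials_eq:
  fixes g gx gy gxy gyx :: "real \<Rightarrow> real \<Rightarrow> real"
  assumes dx: "\<And>x y. ((\<lambda>x. g x y) has_real_derivative gx x y) (at x)"
    and dy: "\<And>x y. ((\<lambda>y. g x y) has_real_derivative gy x y) (at y)"
    and dxy: "\<And>x y. ((\<lambda>y. gx x y) has_real_derivative gxy x y) (at y)"
    and dyx: "\<And>x y. ((\<lambda>x. gy x y) has_real_derivative gyx x y) (at x)"
    and cxy: "continuous_on UNIV (\<lambda>p. gxy (fst p) (snd p))"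
    and cyx: "continuous_on UNIV (\<lambda>p. gyx (fst p) (snd p))"
  shows "gxy x0 y0 = gyx x0 y0"
proof (rule ccontr)
  assume ne: "gxy x0 y0 \<noteq> gyx x0 y0"
  define e where "e = \<bar>gxy x0 y0 - gyx x0 y0\<bar> / 2"
  have e: "e > 0" using ne by (simp add: e_def)
  obtain d1 where d1: "d1 > 0" "\<And>p. dist p (x0, y0) < d1 \<Longrightarrow> dist (gxy (fst p) (snd p)) (gxy x0 y0) < e"
    using cxy e unfolding continuous_on_iff by (metis UNIV_I fst_conv snd_conv)
  obtain d2 where d2: "d2 > 0" "\<And>p. dist p (x0, y0) < d2 \<Longrightarrow> dist (gyx (fst p) (snd p)) (gyx x0 y0) < e"
    using cyx e unfolding continuous_on_iff by (metis UNIV_I fst_conv snd_conv)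
  define h where "h = min d1 d2 / 2"
  have h: "h > 0" using d1 d2 by (simp add: h_def)
  obtain a b c d where abcd: "x0 < a" "a < x0 + h" "y0 < b" "b < y0 + h"
     "x0 < c" "c < x0 + h" "y0 < d" "d < y0 + h" and eq: "gxy a b = gyx c d"
    using mixed_partials_mvt[OF dx dy dxy dyx h] by blast
  have near: "dist (p, q) (x0, y0) < min d1 d2" if "x0 < p" "p < x0 + h" "y0 < q" "q < y0 + h" for p q
  proof -
    have "dist (p, q) (x0, y0) = sqrt ((p - x0)\<^sup>2 + (q - y0)\<^sup>2)"
      by (simp add: dist_Pair_Pair dist_real_def)
    also have "\<dots> \<le> \<bar>p - x0\<bar> + \<bar>q - y0\<bar>" by (rule sqrt_sum_squares_le_sum_abs)
    also have "\<dots> < 2 * h" using that by simp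
    finally show ?thesis by (simp add: h_def)
  qed
  have "dist (gxy a b) (gxy x0 y0) < e" using d1(2)[of "(a, b)"] near[of a b] abcd by simp
  moreover have "dist (gyx c d) (gyx x0 y0) < e" using d2(2)[of "(c, d)"] near[of c d] abcd by simp
  ultimately have "\<bar>gxy x0 y0 - gyx x0 y0\<bar> < 2 * e" using eq by (simp add: dist_real_def)
  then show False by (simp add: e_def)
qed

lemma continuous_on_fun_upd2: "continuous_on UNIV (\<lambda>p::real \<times> real. u(a := fst p, b := snd p))"
proof (rule continuous_on_coordinatewise_then_product)
  fix c
  show "continuous_on UNIV (\<lambda>p::real \<times> real. (u(a := fst p, b := snd p)) c)"
    by (cases "c = b"; cases "c = a") (auto intro: continuous_intros)
qed

lemma pd_commute:
  assumes F: "smooth F"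
  shows "pd a (pd b F) = pd b (pd a F)"
proof (cases "a = b")
  case False
  show ?thesis
  proof
    fix u :: jetpt
    define U where "U x y = u(a := x, b := y)" for x y
    have Ua: "(u(b := y))(a := x) = U x y" for x y using False by (simp add: U_def fun_upd_twist)
    have Ub: "(u(a := x))(b := y) = U x y" for x y by (simp add: U_def)
    have dx: "((\<lambda>x. G (U x y)) has_real_derivative pd a G (U x y)) (at x)"
      if "partially_differentiable G" for G x y
      using pd_has_real_derivative_at[OF that, of "u(b := y)" a x] by (simp add: Ua)
    have dy: "((\<lambda>y. G (U x y)) has_real_derivative pd b G (U x y)) (at y)"
      if "partially_differentiable G" for G x y
      using pd_has_real_derivative_at[OF that, of "u(a := x)" b y] by (simp add: Ub)
    have cont: "continuous_on UNIV (\<lambda>p::real \<times> real. G (U (fst p) (snd p)))"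
      if "continuous_on UNIV G" for G
      using continuous_on_compose2[OF that continuous_on_fun_upd2] by (simp add: U_def)
    have diff: "partially_differentiable F" "partially_differentiable (pd a F)"
      "partially_differentiable (pd b F)"
      using F by (auto intro: smooth_partially_differentiable smooth_pd)
    have second: "continuous_on UNIV (pd b (pd a F))" "continuous_on UNIV (pd a (pd b F))"
      using F unfolding smooth_def by (metis pds_Cons pds_Nil)+
    have "pd b (pd a F) (U (u a) (u b)) = pd a (pd b F) (U (u a) (u b))"
      by (rule mixed_partials_eq[where g = "\<lambda>x y. F (U x y)"], rule dx, rule diff, rule dy,
          rule diff, rule dy, rule diff, rule dx, rule diff, rule cont, rule second, rule cont,
          rule second)
    then show "pd a (pd b F) u = pd b (pd a F) u" by (simp add: U_def)
  qed
qed simp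

section \<open>Commutation of total derivatives\<close>

lemma coord_incr_commute: "coord_incr i (coord_incr j c) = coord_incr j (coord_incr i c)"
  by (cases c) (simp_all add: incr_commute)

lemma pd_Dtot_upto:
  assumes F: "smooth F"
  shows "pd c (Dtot_upto n m N j F) = (\<lambda>w. pd c (pd (X j) F) w +
    (\<Sum>x\<in>pcoords n m N. (if c = coord_incr j x then 1 else 0) * pd x F w
        + w (coord_incr j x) * pd c (pd x F) w))"
proof -
  have coeff: "partially_differentiable (\<lambda>w. w (coord_incr j x) * pd x F w)" for x
    using F by (intro partially_differentiable_mult partially_differentiable_coord
        smooth_partially_differentiable smooth_pd)
  have "partially_differentiable (pd (X j) F)"
    using F by (intro smooth_partially_differentiable smooth_pd)
  moreover have "partially_differentiable (\<lambda>w. \<Sum>x\<in>pcoords n m N. w (coord_incr j x) * pd x F w)"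
    using coeff by (intro partially_differentiable_sum finite_pcoords)
  ultimately show ?thesis
    unfolding Dtot_upto_def
    by (simp add: pd_add pd_sum[OF finite_pcoords coeff] pd_mult partially_differentiable_coord
        smooth_partially_differentiable smooth_pd F pd_coord)
qed

text \<open>The terms of \<open>D\<^sub>i (D\<^sub>j F)\<close> in which \<open>\<partial>/\<partial>p\<close> falls on a coefficient of
  \<open>D\<^sub>j F\<close>; they are symmetric in \<open>i\<close> and \<open>j\<close>.\<close>

lemma sum_pcoords_coord_incr_delta:
  assumes F: "has_order_le n m N F" and j: "j < n"
  shows "(\<Sum>y\<in>pcoords n m (Suc N). w (coord_incr i y) *
            (\<Sum>x\<in>pcoords n m (Suc N). (if y = coord_incr j x then 1 else 0) * pd x F w))
       = (\<Sum>x\<in>pcoords n m (Suc N). w (coord_incr i (coord_incr j x)) * pd x F w)"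
proof -
  let ?S = "pcoords n m (Suc N)"
  have "(\<Sum>y\<in>?S. w (coord_incr i y) * (\<Sum>x\<in>?S. (if y = coord_incr j x then 1 else 0) * pd x F w))
      = (\<Sum>x\<in>?S. \<Sum>y\<in>?S. if y = coord_incr j x then w (coord_incr i y) * pd x F w else 0)"
    unfolding sum_distrib_left by (subst sum.swap) (intro sum.cong refl, simp)
  also have "\<dots> = (\<Sum>x\<in>?S. w (coord_incr i (coord_incr j x)) * pd x F w)"
  proof (rule sum.cong[OF refl])
    fix x
    assume x: "x \<in> ?S"
    show "(\<Sum>y\<in>?S. if y = coord_incr j x then w (coord_incr i y) * pd x F w else 0)
        = w (coord_incr i (coord_incr j x)) * pd x F w"
    proof (cases "coord_incr j x \<in> ?S")
      case False
      with x j have "\<not> valid_coord n m N x"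
        by (auto simp: valid_coord_pcoords valid_coord_def midx_incr mabs_incr)
      then have "pd x F w = 0" by (rule pd_eq_0_if_not_valid_coord[OF F])
      then show ?thesis by (simp cong: if_cong)
    qed (simp add: sum.delta[OF finite_pcoords])
  qed
  finally show ?thesis .
qed

lemma pd_X_Dtot_upto:
  assumes F: "smooth F"
  shows "pd (X k) (Dtot_upto n m N j F) w = pd (X k) (pd (X j) F) w +
    (\<Sum>x\<in>pcoords n m N. w (coord_incr j x) * pd (X k) (pd x F) w)"
proof -
  have "X k \<noteq> coord_incr j x" if "x \<in> pcoords n m N" for x
    using that by (auto simp: pcoords_def)
  then show ?thesis by (simp add: pd_Dtot_upto[OF F] cong: sum.cong)
qed

lemma Dtot_upto_Dtot_upto:
  assumes F: "smooth F" "has_order_le n m N F" and j: "j < n"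
  defines "S \<equiv> pcoords n m (Suc N)"
  shows "Dtot_upto n m (Suc N) i (Dtot_upto n m (Suc N) j F) w =
      pd (X i) (pd (X j) F) w
    + (\<Sum>x\<in>S. w (coord_incr j x) * pd (X i) (pd x F) w)
    + (\<Sum>y\<in>S. w (coord_incr i y) * pd y (pd (X j) F) w)
    + (\<Sum>x\<in>S. w (coord_incr i (coord_incr j x)) * pd x F w)
    + (\<Sum>y\<in>S. \<Sum>x\<in>S. w (coord_incr i y) * w (coord_incr j x) * pd y (pd x F) w)"
proof -
  have "Dtot_upto n m (Suc N) i (Dtot_upto n m (Suc N) j F) w =
      pd (X i) (Dtot_upto n m (Suc N) j F) w
    + (\<Sum>y\<in>S. w (coord_incr i y) * pd y (Dtot_upto n m (Suc N) j F) w)"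
    unfolding Dtot_upto_def[of n m "Suc N" i] S_def ..
  also have "\<dots> = pd (X i) (pd (X j) F) w
    + (\<Sum>x\<in>S. w (coord_incr j x) * pd (X i) (pd x F) w)
    + (\<Sum>y\<in>S. w (coord_incr i y) * pd y (pd (X j) F) w)
    + (\<Sum>y\<in>S. w (coord_incr i y) *
         (\<Sum>x\<in>S. (if y = coord_incr j x then 1 else 0) * pd x F w))
    + (\<Sum>y\<in>S. \<Sum>x\<in>S. w (coord_incr i y) * w (coord_incr j x) * pd y (pd x F) w)"
    unfolding pd_X_Dtot_upto[OF F(1)] unfolding pd_Dtot_upto[OF F(1)] S_def
    by (simp add: algebra_simps sum.distrib sum_distrib_left)
  finally show ?thesis
    unfolding S_def sum_pcoords_coord_incr_delta[OF F(2) j] .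
qed

lemma Dtot_commute:
  assumes F: "smooth_jet n m F" and i: "i < n" and j: "j < n"
  shows "Dtot n m i (Dtot n m j F) = Dtot n m j (Dtot n m i F)"
proof -
  define N where "N = jet_order n m F"
  have N: "has_order_le n m N F" unfolding N_def by (rule smooth_jet_has_order_le[OF F])
  have Dtot_Dtot: "Dtot n m k (Dtot n m l F) = Dtot_upto n m (Suc N) k (Dtot_upto n m (Suc N) l F)"
    if "l < n" for k l
    using Dtot_eq_Dtot_upto[OF has_order_le_Dtot[OF that N]] Dtot_eq_Dtot_upto[OF N]
      Dtot_upto_mono[OF N, of "Suc N"] by simp
  let ?S = "pcoords n m (Suc N)"
  have swap: "(\<Sum>y\<in>?S. \<Sum>x\<in>?S. w (coord_incr i y) * w (coord_incr j x) * pd y (pd x F) w)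
      = (\<Sum>y\<in>?S. \<Sum>x\<in>?S. w (coord_incr j y) * w (coord_incr i x) * pd y (pd x F) w)" for w
    by (subst sum.swap) (simp add: pd_commute[OF smooth_jet_smooth[OF F]] mult_ac)
  \<comment> \<open>Each term of \<open>Dtot_upto_Dtot_upto\<close> is symmetric in \<open>i\<close> and \<open>j\<close>: the
    second-derivative terms by Schwarz, the remaining one since index increments commute.\<close>
  show ?thesis
    unfolding Dtot_Dtot[OF i] Dtot_Dtot[OF j]
    by (rule ext, simp only: Dtot_upto_Dtot_upto[OF smooth_jet_smooth[OF F] N] i j swap
        pd_commute[OF smooth_jet_smooth[OF F]] coord_incr_commute[of i j])
qed

definition Dfold :: "nat \<Rightarrow> nat \<Rightarrow> nat list \<Rightarrow> (nat \<Rightarrow> nat) \<Rightarrow> jetfun \<Rightarrow> jetfun" where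
  "Dfold n m xs t G = foldr (\<lambda>i G. (Dtot n m i ^^ t i) G) xs G"

lemma Dfold_Nil [simp]: "Dfold n m [] t G = G"
  by (simp add: Dfold_def)

lemma Dfold_Cons [simp]: "Dfold n m (x # xs) t G = (Dtot n m x ^^ t x) (Dfold n m xs t G)"
  by (simp add: Dfold_def)

lemma Dmulti_eq_Dfold: "Dmulti n m t G = Dfold n m [0..<n] t G"
  by (simp add: Dmulti_def Dfold_def)

lemma Dfold_cong: "(\<And>x. x \<in> set xs \<Longrightarrow> t x = t' x) \<Longrightarrow> Dfold n m xs t G = Dfold n m xs t' G"
  by (induction xs) auto

lemma smooth_jet_Dtot_pow: "i < n \<Longrightarrow> smooth_jet n m G \<Longrightarrow> smooth_jet n m ((Dtot n m i ^^ k) G)"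
  by (induction k) (auto intro: smooth_jet_Dtot)

lemma smooth_jet_Dfold:
  "\<forall>x\<in>set xs. x < n \<Longrightarrow> smooth_jet n m G \<Longrightarrow> smooth_jet n m (Dfold n m xs t G)"
  by (induction xs) (auto intro: smooth_jet_Dtot_pow)

lemma smooth_jet_Dmulti: "smooth_jet n m G \<Longrightarrow> smooth_jet n m (Dmulti n m t G)"
  unfolding Dmulti_eq_Dfold by (rule smooth_jet_Dfold) auto

lemma Dtot_pow_add:
  "i < n \<Longrightarrow> smooth_jet n m f \<Longrightarrow> smooth_jet n m g \<Longrightarrow>
     (Dtot n m i ^^ k) (\<lambda>u. f u + g u) = (\<lambda>u. (Dtot n m i ^^ k) f u + (Dtot n m i ^^ k) g u)"
  by (induction k) (auto simp: Dtot_add smooth_jet_Dtot_pow)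

lemma Dfold_add:
  "\<forall>x\<in>set xs. x < n \<Longrightarrow> smooth_jet n m f \<Longrightarrow> smooth_jet n m g \<Longrightarrow>
     Dfold n m xs t (\<lambda>u. f u + g u) = (\<lambda>u. Dfold n m xs t f u + Dfold n m xs t g u)"
  by (induction xs) (auto simp: Dtot_pow_add smooth_jet_Dfold)

lemma Dmulti_add:
  "smooth_jet n m f \<Longrightarrow> smooth_jet n m g \<Longrightarrow>
     Dmulti n m t (\<lambda>u. f u + g u) = (\<lambda>u. Dmulti n m t f u + Dmulti n m t g u)"
  unfolding Dmulti_eq_Dfold by (rule Dfold_add) auto

lemma Dmulti_zero: "Dmulti n m t (\<lambda>u. 0) = (\<lambda>u. 0)"
proof -
  have Dtot_pow_zero: "(Dtot n m i ^^ k) (\<lambda>u. 0) = (\<lambda>u. 0)" for i k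
    by (induction k) (auto simp: Dtot_const)
  have "Dfold n m xs t (\<lambda>u. 0) = (\<lambda>u. 0)" for xs
    by (induction xs) (auto simp: Dtot_pow_zero)
  then show ?thesis by (simp add: Dmulti_eq_Dfold)
qed

lemma Dmulti_sum:
  "finite S \<Longrightarrow> (\<And>x. x \<in> S \<Longrightarrow> smooth_jet n m (f x)) \<Longrightarrow>
     Dmulti n m t (\<lambda>u. \<Sum>x\<in>S. f x u) = (\<lambda>u. \<Sum>x\<in>S. Dmulti n m t (f x) u)"
  by (induction S rule: finite_induct) (simp_all add: Dmulti_zero Dmulti_add smooth_jet_sum)

lemma Dmulti_zero_index: "Dmulti n m (\<lambda>_. 0) G = G"
proof -
  have "Dfold n m xs (\<lambda>_. 0) G = G" for xs by (induction xs) auto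
  then show ?thesis by (simp add: Dmulti_eq_Dfold)
qed

lemma Dtot_Dtot_pow_commute:
  "i < n \<Longrightarrow> x < n \<Longrightarrow> smooth_jet n m H \<Longrightarrow>
     Dtot n m i ((Dtot n m x ^^ k) H) = (Dtot n m x ^^ k) (Dtot n m i H)"
proof (induction k)
  case (Suc k)
  then have "Dtot n m i (Dtot n m x ((Dtot n m x ^^ k) H)) = Dtot n m x (Dtot n m i ((Dtot n m x ^^ k) H))"
    by (intro Dtot_commute smooth_jet_Dtot_pow)
  with Suc show ?case by simp
qed simp

lemma Dtot_Dfold:
  "i < n \<Longrightarrow> \<forall>x\<in>set xs. x < n \<Longrightarrow> distinct xs \<Longrightarrow> i \<in> set xs \<Longrightarrow> smooth_jet n m G \<Longrightarrow>
     Dtot n m i (Dfold n m xs t G) = Dfold n m xs (incr i t) G"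
proof (induction xs)
  case (Cons x xs)
  show ?case
  proof (cases "x = i")
    case True
    with Cons.prems have "Dfold n m xs (incr i t) G = Dfold n m xs t G"
      by (intro Dfold_cong) (auto simp: incr_def)
    moreover have "incr i t i = Suc (t i)" by (simp add: incr_def)
    ultimately show ?thesis using True by simp
  next
    case False
    with Cons have "Dtot n m i (Dfold n m xs t G) = Dfold n m xs (incr i t) G" by auto
    moreover have "incr i t x = t x" using False by (simp add: incr_def)
    ultimately show ?thesis using Cons.prems by (simp add: Dtot_Dtot_pow_commute smooth_jet_Dfold)
  qed
qed simp

lemma Dtot_Dmulti:
  "i < n \<Longrightarrow> smooth_jet n m G \<Longrightarrow> Dtot n m i (Dmulti n m t G) = Dmulti n m (incr i t) G"
  unfolding Dmulti_eq_Dfold by (rule Dtot_Dfold) auto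

section \<open>The ideal \<open>\<J>\<^sub>s(\<E>)\<close>\<close>

definition Jideal_indices :: "nat \<Rightarrow> nat \<Rightarrow> (nat \<Rightarrow> jetfun) \<Rightarrow> nat \<Rightarrow> int \<Rightarrow> (nat \<Rightarrow> nat) set" where
  "Jideal_indices n m F i s = {t. midx n t \<and> int (jet_order n m (F i) + mabs n t) \<le> s}"

lemma finite_Jideal_indices: "finite (Jideal_indices n m F i s)"
  by (rule finite_subset[OF _ finite_multi_indices[of n "nat s"]]) (auto simp: Jideal_indices_def)

lemma Jideal_iff:
  "w \<in> Jideal n m r F s \<longleftrightarrow> (\<exists>a. (\<forall>i t. smooth_jet n m (a i t)) \<and>
     w = (\<lambda>u. \<Sum>i<r. \<Sum>t\<in>Jideal_indices n m F i s. a i t u * Dmulti n m t (F i) u))"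
  unfolding Jideal_def Jideal_indices_def by simp

locale jet_system =
  fixes n m r :: nat and F :: "nat \<Rightarrow> jetfun"
  assumes smooth_jet_F: "\<And>i. i < r \<Longrightarrow> smooth_jet n m (F i)"
begin

abbreviation J :: "int \<Rightarrow> jetfun set" where
  "J s \<equiv> Jideal n m r F s"

abbreviation Jind :: "nat \<Rightarrow> int \<Rightarrow> (nat \<Rightarrow> nat) set" where
  "Jind i s \<equiv> Jideal_indices n m F i s"

lemma JidealE:
  assumes "w \<in> J s"
  obtains a where "\<forall>i t. smooth_jet n m (a i t)"
    and "w = (\<lambda>u. \<Sum>i<r. \<Sum>t\<in>Jind i s. a i t u * Dmulti n m t (F i) u)"
  using assms unfolding Jideal_iff by blast

lemma Jideal_zero: "(\<lambda>u. 0) \<in> J s"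
  unfolding Jideal_iff by (rule exI[of _ "\<lambda>i t u. 0"]) (simp add: smooth_jet_const)

lemma Jideal_add:
  assumes "w1 \<in> J s" "w2 \<in> J s"
  shows "(\<lambda>u. w1 u + w2 u) \<in> J s"
proof -
  obtain a1 where a1: "\<forall>i t. smooth_jet n m (a1 i t)"
    and w1: "w1 = (\<lambda>u. \<Sum>i<r. \<Sum>t\<in>Jind i s. a1 i t u * Dmulti n m t (F i) u)"
    using assms(1) by (rule JidealE)
  obtain a2 where a2: "\<forall>i t. smooth_jet n m (a2 i t)"
    and w2: "w2 = (\<lambda>u. \<Sum>i<r. \<Sum>t\<in>Jind i s. a2 i t u * Dmulti n m t (F i) u)"
    using assms(2) by (rule JidealE)
  show ?thesis unfolding Jideal_iff
    by (rule exI[of _ "\<lambda>i t u. a1 i t u + a2 i t u"])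
      (simp add: a1 a2 w1 w2 smooth_jet_add sum.distrib ring_distribs)
qed

lemma Jideal_mult:
  assumes c: "smooth_jet n m c" and w: "w \<in> J s"
  shows "(\<lambda>u. c u * w u) \<in> J s"
proof -
  obtain a where a: "\<forall>i t. smooth_jet n m (a i t)"
    and w: "w = (\<lambda>u. \<Sum>i<r. \<Sum>t\<in>Jind i s. a i t u * Dmulti n m t (F i) u)"
    using w by (rule JidealE)
  show ?thesis unfolding Jideal_iff
    by (rule exI[of _ "\<lambda>i t u. c u * a i t u"])
      (simp add: a c w smooth_jet_mult sum_distrib_left mult.assoc)
qed

lemma Jideal_scale: "w \<in> J s \<Longrightarrow> (\<lambda>u. b * w u) \<in> J s"
  using Jideal_mult[OF smooth_jet_const] by blast

lemma Jideal_sum: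
  "finite S \<Longrightarrow> (\<And>x. x \<in> S \<Longrightarrow> f x \<in> J s) \<Longrightarrow> (\<lambda>u. \<Sum>x\<in>S. f x u) \<in> J s"
  by (induction S rule: finite_induct) (simp_all add: Jideal_zero Jideal_add)

lemma Jideal_mono:
  assumes w: "w \<in> J s" and s: "s \<le> s'"
  shows "w \<in> J s'"
proof -
  obtain a where a: "\<forall>i t. smooth_jet n m (a i t)"
    and w: "w = (\<lambda>u. \<Sum>i<r. \<Sum>t\<in>Jind i s. a i t u * Dmulti n m t (F i) u)"
    using w by (rule JidealE)
  have "Jind i s \<subseteq> Jind i s'" for i using s by (auto simp: Jideal_indices_def)
  then have "(\<Sum>t\<in>Jind i s'. (if t \<in> Jind i s then a i t u else 0) * Dmulti n m t (F i) u)
      = (\<Sum>t\<in>Jind i s. a i t u * Dmulti n m t (F i) u)" for i u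
    by (simp add: if_distrib[of "\<lambda>x. x * _"] sum.inter_restrict[OF finite_Jideal_indices, symmetric]
        Int_absorb1 cong: if_cong)
  then show ?thesis unfolding Jideal_iff
    by (intro exI[of _ "\<lambda>i t. if t \<in> Jind i s then a i t else (\<lambda>u. 0)"])
      (simp add: a w smooth_jet_const if_distrib[of "\<lambda>f. f _"])
qed

lemma Jideal_generator:
  assumes i: "i < r" and t: "midx n t" "int (jet_order n m (F i) + mabs n t) \<le> s"
    and c: "smooth_jet n m c"
  shows "(\<lambda>u. c u * Dmulti n m t (F i) u) \<in> J s"
proof -
  have t_ind: "t \<in> Jind i s" using t by (simp add: Jideal_indices_def)
  let ?a = "\<lambda>i' t'. if i' = i \<and> t' = t then c else (\<lambda>u. 0)"
  have "(\<Sum>i'<r. \<Sum>t'\<in>Jind i' s. ?a i' t' u * Dmulti n m t' (F i') u)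
      = (\<Sum>i'<r. if i' = i then (\<Sum>t'\<in>Jind i s. if t' = t then c u * Dmulti n m t (F i) u else 0) else 0)"
    for u by (intro sum.cong refl) (auto intro: sum.cong)
  also have "\<dots> u = c u * Dmulti n m t (F i) u" for u
    using i t_ind by (simp add: sum.delta[OF finite_Jideal_indices])
  finally have "(\<Sum>i'<r. \<Sum>t'\<in>Jind i' s. ?a i' t' u * Dmulti n m t' (F i') u) = c u * Dmulti n m t (F i) u"
    for u .
  then show ?thesis unfolding Jideal_iff
    by (intro exI[of _ ?a]) (auto simp: c smooth_jet_const)
qed

lemma smooth_jet_Jideal:
  assumes "w \<in> J s"
  shows "smooth_jet n m w"
proof -
  obtain a where a: "\<forall>i t. smooth_jet n m (a i t)"
    and w: "w = (\<lambda>u. \<Sum>i<r. \<Sum>t\<in>Jind i s. a i t u * Dmulti n m t (F i) u)"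
    using assms by (rule JidealE)
  show ?thesis unfolding w
    by (intro smooth_jet_sum finite_Jideal_indices smooth_jet_mult smooth_jet_Dmulti smooth_jet_F
        finite_lessThan) (auto simp: a)
qed

lemma Jideal_Dtot_generator:
  assumes i: "i < n" and i': "i' < r" and t: "t \<in> Jind i' s" and a: "smooth_jet n m a"
  shows "Dtot n m i (\<lambda>u. a u * Dmulti n m t (F i') u) \<in> J (s + 1)"
proof -
  have t': "midx n t" "int (jet_order n m (F i') + mabs n t) \<le> s"
    using t by (auto simp: Jideal_indices_def)
  have "Dtot n m i (\<lambda>u. a u * Dmulti n m t (F i') u)
      = (\<lambda>u. Dtot n m i a u * Dmulti n m t (F i') u + a u * Dmulti n m (incr i t) (F i') u)"
    using Dtot_mult[OF a smooth_jet_Dmulti[OF smooth_jet_F[OF i']]] Dtot_Dmulti[OF i smooth_jet_F[OF i']]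
    by simp
  also have "\<dots> \<in> J (s + 1)"
    using t' by (intro Jideal_add Jideal_generator[OF i'] smooth_jet_Dtot i a midx_incr)
      (auto simp: mabs_incr[OF i])
  finally show ?thesis .
qed

lemma Jideal_Dtot:
  assumes i: "i < n" and w: "w \<in> J s"
  shows "Dtot n m i w \<in> J (s + 1)"
proof -
  obtain a where a: "\<forall>i t. smooth_jet n m (a i t)"
    and w: "w = (\<lambda>u. \<Sum>i<r. \<Sum>t\<in>Jind i s. a i t u * Dmulti n m t (F i) u)"
    using w by (rule JidealE)
  let ?g = "\<lambda>i' t u. a i' t u * Dmulti n m t (F i') u"
  have g: "smooth_jet n m (?g i' t)" if "i' < r" for i' t
    using a smooth_jet_F[OF that] by (intro smooth_jet_mult smooth_jet_Dmulti) auto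
  have Dtot_inner: "Dtot n m i (\<lambda>u. \<Sum>t\<in>Jind i' s. ?g i' t u) = (\<lambda>u. \<Sum>t\<in>Jind i' s. Dtot n m i (?g i' t) u)"
    if "i' < r" for i'
    by (rule Dtot_sum[OF finite_Jideal_indices g[OF that]])
  have "Dtot n m i w = (\<lambda>u. \<Sum>i'<r. Dtot n m i (\<lambda>u. \<Sum>t\<in>Jind i' s. ?g i' t u) u)"
    unfolding w by (rule Dtot_sum) (auto intro: smooth_jet_sum finite_Jideal_indices g)
  also have "\<dots> = (\<lambda>u. \<Sum>i'<r. \<Sum>t\<in>Jind i' s. Dtot n m i (?g i' t) u)"
    by (intro ext sum.cong refl) (simp add: Dtot_inner)
  also have "\<dots> \<in> J (s + 1)"
    by (intro Jideal_sum finite_Jideal_indices finite_lessThan Jideal_Dtot_generator i)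
      (auto simp: a)
  finally show ?thesis .
qed

lemma Jideal_Dtot_pow: "i < n \<Longrightarrow> w \<in> J s \<Longrightarrow> (Dtot n m i ^^ k) w \<in> J (s + int k)"
proof (induction k)
  case (Suc k)
  then have "Dtot n m i ((Dtot n m i ^^ k) w) \<in> J (s + int k + 1)" by (intro Jideal_Dtot)
  then show ?case by (simp add: ac_simps)
qed simp

lemma Jideal_Dfold:
  "\<forall>x\<in>set xs. x < n \<Longrightarrow> w \<in> J s \<Longrightarrow> Dfold n m xs t w \<in> J (s + int (sum_list (map t xs)))"
proof (induction xs)
  case (Cons x xs)
  then have "(Dtot n m x ^^ t x) (Dfold n m xs t w) \<in> J (s + int (sum_list (map t xs)) + int (t x))"
    by (intro Jideal_Dtot_pow) auto
  then show ?case by (simp add: algebra_simps)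
qed simp

lemma Jideal_Dmulti: "w \<in> J s \<Longrightarrow> Dmulti n m t w \<in> J (s + int (mabs n t))"
proof -
  assume w: "w \<in> J s"
  have "sum_list (map t [0..<n]) = mabs n t"
    unfolding mabs_def by (simp add: sum_set_upt_conv_sum_list_nat[symmetric] atLeast0LessThan)
  then show ?thesis unfolding Dmulti_eq_Dfold using Jideal_Dfold[OF _ w, of "[0..<n]" t] by simp
qed

section \<open>Leading terms\<close>

definition has_leading_term :: "nat \<Rightarrow> jetfun \<Rightarrow> (nat \<Rightarrow> nat) \<Rightarrow> jetfun \<Rightarrow> bool" where
  "has_leading_term i0 c T Y \<longleftrightarrow> smooth_jet n m Y \<and> smooth_jet n m c \<and> midx n T \<and>
     (\<lambda>u. Y u - c u * Dmulti n m T (F i0) u) \<in> J (int (jet_order n m (F i0) + mabs n T) - 1)"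

lemma has_leading_term_Dtot:
  assumes i: "i < n" and i0: "i0 < r" and Y: "has_leading_term i0 c T Y"
  shows "has_leading_term i0 c (incr i T) (Dtot n m i Y)"
proof -
  let ?K = "int (jet_order n m (F i0) + mabs n T)"
  let ?D = "Dmulti n m T (F i0)"
  define Z where "Z = (\<lambda>u. Y u - c u * ?D u)"
  have Z: "Z \<in> J (?K - 1)" and sY: "smooth_jet n m Y" and c: "smooth_jet n m c" and T: "midx n T"
    using Y unfolding has_leading_term_def Z_def by auto
  have sD: "smooth_jet n m ?D" using smooth_jet_F[OF i0] by (rule smooth_jet_Dmulti)
  have "Dtot n m i Y = Dtot n m i (\<lambda>u. Z u + c u * ?D u)" unfolding Z_def by simp
  also have "\<dots> = (\<lambda>u. Dtot n m i Z u + Dtot n m i c u * ?D u + c u * Dmulti n m (incr i T) (F i0) u)"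
    by (simp add: Dtot_add Dtot_mult smooth_jet_Jideal[OF Z] smooth_jet_mult c sD
        Dtot_Dmulti[OF i smooth_jet_F[OF i0]] add.assoc)
  finally have "(\<lambda>u. Dtot n m i Y u - c u * Dmulti n m (incr i T) (F i0) u)
      = (\<lambda>u. Dtot n m i Z u + Dtot n m i c u * ?D u)" by simp
  also have "\<dots> \<in> J ?K"
    using Jideal_Dtot[OF i Z] by (intro Jideal_add Jideal_generator[OF i0 T] smooth_jet_Dtot i c) auto
  finally show ?thesis
    unfolding has_leading_term_def
    using smooth_jet_Dtot[OF i sY] c midx_incr[OF i T] by (simp add: mabs_incr[OF i])
qed

lemma has_leading_term_Dtot_pow:
  assumes i: "i < n" and i0: "i0 < r" and Y: "has_leading_term i0 c T Y"
  shows "has_leading_term i0 c (T(i := T i + k)) ((Dtot n m i ^^ k) Y)"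
proof (induction k)
  case (Suc k)
  have "has_leading_term i0 c (incr i (T(i := T i + k))) (Dtot n m i ((Dtot n m i ^^ k) Y))"
    by (rule has_leading_term_Dtot[OF i i0 Suc])
  moreover have "incr i (T(i := T i + k)) = T(i := T i + Suc k)" by (simp add: incr_def)
  ultimately show ?case by (simp only: funpow.simps comp_apply)
qed (use Y in simp)

lemma has_leading_term_Dfold:
  assumes i0: "i0 < r" and Y: "has_leading_term i0 c T Y"
    and xs: "\<forall>x\<in>set xs. x < n" "distinct xs"
  shows "has_leading_term i0 c (\<lambda>i. T i + (if i \<in> set xs then s i else 0)) (Dfold n m xs s Y)"
  using xs
proof (induction xs)
  case (Cons x xs)
  let ?T = "\<lambda>i. T i + (if i \<in> set xs then s i else 0)"
  have "has_leading_term i0 c (?T(x := ?T x + s x)) ((Dtot n m x ^^ s x) (Dfold n m xs s Y))"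
    using Cons by (intro has_leading_term_Dtot_pow[OF _ i0]) auto
  moreover have "?T(x := ?T x + s x) = (\<lambda>i. T i + (if i \<in> set (x # xs) then s i else 0))"
    using Cons.prems by (auto simp: fun_eq_iff)
  ultimately show ?case by simp
qed (use Y in simp)

lemma Dmulti_mult_Dmulti_mod_J:
  assumes i0: "i0 < r" and T: "midx n T" and s: "midx n s" and c: "smooth_jet n m c"
  shows "(\<lambda>u. Dmulti n m s (\<lambda>u. c u * Dmulti n m T (F i0) u) u - c u * Dmulti n m (\<lambda>i. T i + s i) (F i0) u)
     \<in> J (int (jet_order n m (F i0) + mabs n T + mabs n s) - 1)"
proof -
  have "has_leading_term i0 c T (\<lambda>u. c u * Dmulti n m T (F i0) u)"
    unfolding has_leading_term_def using T c Jideal_zero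
    by (auto intro: smooth_jet_mult smooth_jet_Dmulti smooth_jet_F[OF i0])
  then have "has_leading_term i0 c (\<lambda>i. T i + (if i \<in> set [0..<n] then s i else 0))
      (Dmulti n m s (\<lambda>u. c u * Dmulti n m T (F i0) u))"
    unfolding Dmulti_eq_Dfold by (rule has_leading_term_Dfold[OF i0]) auto
  moreover have "(\<lambda>i. T i + (if i \<in> set [0..<n] then s i else 0)) = (\<lambda>i. T i + s i)"
    using s by (auto simp: fun_eq_iff midx_def)
  ultimately have "has_leading_term i0 c (\<lambda>i. T i + s i) (Dmulti n m s (\<lambda>u. c u * Dmulti n m T (F i0) u))"
    by (simp only:)
  then show ?thesis unfolding has_leading_term_def mabs_add by (simp add: add.assoc)
qed

lemma Dmulti_leading_term_sum:
  assumes i0: "i0 < r" and I: "finite I"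
    and c: "\<And>x. x \<in> I \<Longrightarrow> smooth_jet n m (c x)"
    and T: "\<And>x. x \<in> I \<Longrightarrow> midx n (T x)"
    and K: "\<And>x. x \<in> I \<Longrightarrow> jet_order n m (F i0) + mabs n (T x) = K"
    and Y: "(\<lambda>u. Y u - (\<Sum>x\<in>I. c x u * Dmulti n m (T x) (F i0) u)) \<in> J (int K - 1)"
    and s: "midx n s" "mabs n s \<le> L"
  shows "(\<lambda>u. Dmulti n m s Y u -
      (if mabs n s = L then \<Sum>x\<in>I. c x u * Dmulti n m (\<lambda>i. T x i + s i) (F i0) u else 0))
    \<in> J (int (K + L) - 1)"
proof -
  define g where "g x = (\<lambda>u. c x u * Dmulti n m (T x) (F i0) u)" for x
  define Z where "Z = (\<lambda>u. Y u - (\<Sum>x\<in>I. g x u))"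
  have g: "smooth_jet n m (g x)" if "x \<in> I" for x
    unfolding g_def using c[OF that] smooth_jet_F[OF i0] by (intro smooth_jet_mult smooth_jet_Dmulti)
  have Z: "Z \<in> J (int K - 1)" using Y unfolding Z_def g_def .
  have "Dmulti n m s Y = Dmulti n m s (\<lambda>u. Z u + (\<Sum>x\<in>I. g x u))" unfolding Z_def by simp
  also have "\<dots> = (\<lambda>u. Dmulti n m s Z u + (\<Sum>x\<in>I. Dmulti n m s (g x) u))"
    using g by (simp add: Dmulti_add Dmulti_sum I smooth_jet_Jideal[OF Z] smooth_jet_sum)
  finally have DY: "Dmulti n m s Y = \<dots>" .
  have DZ: "Dmulti n m s Z \<in> J (int (K + L) - 1)"
    using Jideal_Dmulti[OF Z] by (rule Jideal_mono) (use s in simp)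
  show ?thesis
  proof (cases "mabs n s = L")
    case True
    have "(\<lambda>u. Dmulti n m s (g x) u - c x u * Dmulti n m (\<lambda>i. T x i + s i) (F i0) u) \<in> J (int (K + L) - 1)"
      if "x \<in> I" for x
      using Dmulti_mult_Dmulti_mod_J[OF i0 T[OF that] s(1) c[OF that]] True K[OF that] by (simp add: g_def)
    then have "(\<lambda>u. Dmulti n m s Z u + (\<Sum>x\<in>I. Dmulti n m s (g x) u - c x u * Dmulti n m (\<lambda>i. T x i + s i) (F i0) u))
        \<in> J (int (K + L) - 1)"
      by (intro Jideal_add DZ Jideal_sum I)
    with True show ?thesis by (simp add: DY sum_subtractf algebra_simps)
  next
    case False
    have "Dmulti n m s (g x) \<in> J (int (K + L) - 1)" if "x \<in> I" for x
    proof -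
      have "g x \<in> J (int K)"
        unfolding g_def by (rule Jideal_generator[OF i0 T[OF that]]) (use K[OF that] c[OF that] in auto)
      from Jideal_Dmulti[OF this] show ?thesis by (rule Jideal_mono) (use False s in simp)
    qed
    then have "(\<lambda>u. Dmulti n m s Z u + (\<Sum>x\<in>I. Dmulti n m s (g x) u)) \<in> J (int (K + L) - 1)"
      by (intro Jideal_add DZ Jideal_sum I)
    with False show ?thesis by (simp add: DY)
  qed
qed

lemma ell_leading_term:
  assumes A: "smooth_jet n m A" and i0: "i0 < r" and I: "finite I"
    and c: "\<And>x. x \<in> I \<Longrightarrow> smooth_jet n m (c x)"
    and T: "\<And>x. x \<in> I \<Longrightarrow> midx n (T x)"
    and K: "\<And>x. x \<in> I \<Longrightarrow> jet_order n m (F i0) + mabs n (T x) = K"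
    and Y: "(\<lambda>u. Y u - (\<Sum>x\<in>I. c x u * Dmulti n m (T x) (F i0) u)) \<in> J (int K - 1)"
  shows "(\<lambda>u. ell n m j A Y u - (\<Sum>x\<in>I. \<Sum>s\<in>{s. midx n s \<and> mabs n s = jet_order n m A}.
            pd (P j s) A u * c x u * Dmulti n m (\<lambda>i. T x i + s i) (F i0) u))
         \<in> J (int (K + jet_order n m A) - 1)"
proof -
  define L where "L = jet_order n m A"
  define S where "S = {s. midx n s \<and> mabs n s \<le> L}"
  define lead where "lead s u =
    (if mabs n s = L then \<Sum>x\<in>I. c x u * Dmulti n m (\<lambda>i. T x i + s i) (F i0) u else 0)" for s u
  have S: "finite S" unfolding S_def by (rule finite_multi_indices)
  have "(\<Sum>x\<in>I. \<Sum>s\<in>{s. midx n s \<and> mabs n s = L}. pd (P j s) A u * c x u * Dmulti n m (\<lambda>i. T x i + s i) (F i0) u)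
      = (\<Sum>s\<in>S. pd (P j s) A u * lead s u)" for u
  proof -
    have "{s. midx n s \<and> mabs n s = L} = {s \<in> S. mabs n s = L}" by (auto simp: S_def)
    then show ?thesis
      unfolding lead_def
      by (simp add: sum.inter_filter[OF S] sum_distrib_left mult.assoc if_distrib[of "\<lambda>x. _ * x"]
          cong: if_cong) (subst sum.swap, rule sum.cong, simp_all split: if_split)
  qed
  then have "(\<lambda>u. ell n m j A Y u - (\<Sum>x\<in>I. \<Sum>s\<in>{s. midx n s \<and> mabs n s = L}.
            pd (P j s) A u * c x u * Dmulti n m (\<lambda>i. T x i + s i) (F i0) u))
      = (\<lambda>u. \<Sum>s\<in>S. pd (P j s) A u * (Dmulti n m s Y u - lead s u))"
    unfolding ell_def S_def L_def by (simp add: algebra_simps sum_subtractf)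
  also have "\<dots> \<in> J (int (K + L) - 1)"
    unfolding lead_def S_def
    by (intro Jideal_sum finite_multi_indices Jideal_mult smooth_jet_pd A
        Dmulti_leading_term_sum[OF i0 I c T K Y]) auto
  finally show ?thesis unfolding L_def .
qed

section \<open>Iterated linearizations\<close>

definition ell_chain :: "(nat \<Rightarrow> nat) \<Rightarrow> (nat \<Rightarrow> nat) \<Rightarrow> nat \<Rightarrow> jetfun" where
  "ell_chain \<zeta> \<nu> k = foldr (\<lambda>k G. ell n m (\<nu> k) (F (\<zeta> k)) G) [k..<m] (F (\<zeta> m))"

definition chain_leading_term :: "(nat \<Rightarrow> nat) \<Rightarrow> (nat \<Rightarrow> nat) \<Rightarrow> nat \<Rightarrow> jetfun" where
  "chain_leading_term \<zeta> \<nu> k u =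
    (\<Sum>ts\<in>PiE {k..<m} (\<lambda>j. {s. midx n s \<and> mabs n s = jet_order n m (F (\<zeta> j))}).
       (\<Prod>j\<in>{k..<m}. pd (P (\<nu> j) (ts j)) (F (\<zeta> j)) u) * Dmulti n m (\<lambda>i. \<Sum>j\<in>{k..<m}. ts j i) (F (\<zeta> m)) u)"

lemma ell_chain_Suc: "k < m \<Longrightarrow> ell_chain \<zeta> \<nu> k = ell n m (\<nu> k) (F (\<zeta> k)) (ell_chain \<zeta> \<nu> (Suc k))"
  by (simp add: ell_chain_def upt_conv_Cons)

lemma chain_leading_term_Suc:
  assumes k: "k < m"
  defines "S \<equiv> {Suc k..<m}"
  shows "chain_leading_term \<zeta> \<nu> k u =
    (\<Sum>g\<in>PiE S (\<lambda>j. {s. midx n s \<and> mabs n s = jet_order n m (F (\<zeta> j))}).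
      \<Sum>s\<in>{s. midx n s \<and> mabs n s = jet_order n m (F (\<zeta> k))}.
        pd (P (\<nu> k) s) (F (\<zeta> k)) u * (\<Prod>j\<in>S. pd (P (\<nu> j) (g j)) (F (\<zeta> j)) u) *
        Dmulti n m (\<lambda>i. (\<Sum>j\<in>S. g j i) + s i) (F (\<zeta> m)) u)"
proof -
  have kS: "k \<notin> S" and ins: "{k..<m} = insert k S" using k by (auto simp: S_def)
  have "(\<Prod>j\<in>S. pd (P (\<nu> j) ((g(k := s)) j)) (F (\<zeta> j)) u) = (\<Prod>j\<in>S. pd (P (\<nu> j) (g j)) (F (\<zeta> j)) u)"
    and "(\<Sum>j\<in>S. (g(k := s)) j i) = (\<Sum>j\<in>S. g j i)" for g s i
    using kS by (auto intro: prod.cong sum.cong)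
  then show ?thesis
    unfolding chain_leading_term_def ins sum_PiE_insert[OF kS]
    using kS by (simp add: S_def add.commute)
qed

lemma ell_chain_leading_term:
  assumes \<zeta>: "\<And>j. j \<le> m \<Longrightarrow> \<zeta> j < r" and k: "k \<le> m"
  shows "(\<lambda>u. ell_chain \<zeta> \<nu> k u - chain_leading_term \<zeta> \<nu> k u)
    \<in> J (int (\<Sum>j\<in>{k..m}. jet_order n m (F (\<zeta> j))) - 1)"
  using k
proof (induction k rule: inc_induct)
  case base
  have "(\<lambda>u. ell_chain \<zeta> \<nu> m u - chain_leading_term \<zeta> \<nu> m u) = (\<lambda>u. 0)"
    by (simp add: ell_chain_def chain_leading_term_def Dmulti_zero_index)
  then show ?case by (simp add: Jideal_zero)
next
  case (step k)
  define S where "S = {Suc k..<m}"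
  define Sk where "Sk = (\<lambda>j. {s. midx n s \<and> mabs n s = jet_order n m (F (\<zeta> j))})"
  define c where "c g = (\<lambda>u. \<Prod>j\<in>S. pd (P (\<nu> j) (g j)) (F (\<zeta> j)) u)" for g :: "nat \<Rightarrow> nat \<Rightarrow> nat"
  define T where "T g = (\<lambda>i. \<Sum>j\<in>S. g j i)" for g :: "nat \<Rightarrow> nat \<Rightarrow> nat"
  define K where "K = (\<Sum>j\<in>{Suc k..m}. jet_order n m (F (\<zeta> j)))"
  have K_insert: "K = jet_order n m (F (\<zeta> m)) + (\<Sum>j\<in>S. jet_order n m (F (\<zeta> j)))"
    unfolding K_def S_def using step.hyps by (simp add: atLeastLessThanSuc_atLeastAtMost[symmetric])
  have T: "midx n (T g)" "jet_order n m (F (\<zeta> m)) + mabs n (T g) = K" if "g \<in> PiE S Sk" for g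
    using midx_mabs_sum_PiE[OF that[unfolded Sk_def]] unfolding T_def K_insert by auto
  have "(\<lambda>u. ell n m (\<nu> k) (F (\<zeta> k)) (ell_chain \<zeta> \<nu> (Suc k)) u -
      (\<Sum>g\<in>PiE S Sk. \<Sum>s\<in>{s. midx n s \<and> mabs n s = jet_order n m (F (\<zeta> k))}.
        pd (P (\<nu> k) s) (F (\<zeta> k)) u * c g u * Dmulti n m (\<lambda>i. T g i + s i) (F (\<zeta> m)) u))
    \<in> J (int (K + jet_order n m (F (\<zeta> k))) - 1)"
  proof (rule ell_leading_term)
    show "finite (PiE S Sk)" unfolding S_def Sk_def by (intro finite_PiE finite_multi_indices_eq) auto
    show "(\<lambda>u. ell_chain \<zeta> \<nu> (Suc k) u - (\<Sum>g\<in>PiE S Sk. c g u * Dmulti n m (T g) (F (\<zeta> m)) u))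
        \<in> J (int K - 1)"
      using step.IH unfolding chain_leading_term_def S_def Sk_def c_def T_def K_def .
  qed (use step.hyps T in \<open>auto simp: c_def S_def intro!: smooth_jet_prod smooth_jet_pd smooth_jet_F \<zeta>\<close>)
  moreover have "K + jet_order n m (F (\<zeta> k)) = (\<Sum>j\<in>{k..m}. jet_order n m (F (\<zeta> j)))"
    unfolding K_def using step.hyps by (simp add: sum.atLeast_Suc_atMost)
  ultimately show ?case
    using step.hyps
    by (simp add: ell_chain_Suc chain_leading_term_Suc S_def Sk_def c_def T_def mult.assoc)
qed

lemma chain_leading_term_minus_ell_chain:
  assumes r: "Suc m \<le> r" and \<zeta>: "\<zeta> permutes {..<Suc m}"
  shows "(\<lambda>u. chain_leading_term \<zeta> \<nu> 0 u - ell_chain \<zeta> \<nu> 0 u) \<in> J (int (\<Sum>i\<le>m. jet_order n m (F i)) - 1)"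
proof -
  have \<zeta>_r: "\<zeta> j < r" if "j \<le> m" for j
    using permutes_in_image[OF \<zeta>, of j] that r by simp
  have "(\<lambda>u. ell_chain \<zeta> \<nu> 0 u - chain_leading_term \<zeta> \<nu> 0 u)
      \<in> J (int (\<Sum>j\<in>{0..m}. jet_order n m (F (\<zeta> j))) - 1)"
    by (rule ell_chain_leading_term) (use \<zeta>_r in auto)
  also have "(\<Sum>j\<in>{0..m}. jet_order n m (F (\<zeta> j))) = (\<Sum>i\<le>m. jet_order n m (F i))"
    using sum.reindex_bij_betw[OF permutes_imp_bij[OF \<zeta>], of "\<lambda>i. jet_order n m (F i)"]
    by (simp add: atLeast0AtMost lessThan_Suc_atMost)
  finally have "(\<lambda>u. ell_chain \<zeta> \<nu> 0 u - chain_leading_term \<zeta> \<nu> 0 u)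
      \<in> J (int (\<Sum>i\<le>m. jet_order n m (F i)) - 1)" .
  from Jideal_scale[OF this, of "-1"] show ?thesis by simp
qed

lemma lead_bracket_eq:
  "lead_bracket n m F u = (1 / fact m) * (\<Sum>\<zeta> | \<zeta> permutes {..<Suc m}. \<Sum>\<nu> | \<nu> permutes {..<m}.
     of_int (sign \<zeta> * sign \<nu>) * chain_leading_term \<zeta> \<nu> 0 u)"
proof -
  have "of_int (sign \<zeta>) / of_int (sign \<nu>) = (of_int (sign \<zeta> * sign \<nu>) :: real)" for \<zeta> \<nu> :: "nat \<Rightarrow> nat"
    by (cases \<nu> rule: sign_cases) simp_all
  then show ?thesis unfolding lead_bracket_def chain_leading_term_def atLeast0LessThan by simp
qed

lemma multibracket_eq:
  "multibracket n m F u = (1 / fact m) * (\<Sum>\<zeta> | \<zeta> permutes {..<Suc m}. \<Sum>\<nu> | \<nu> permutes {..<m}.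
     of_int (sign \<zeta> * sign \<nu>) * ell_chain \<zeta> \<nu> 0 u)"
  unfolding multibracket_def ell_chain_def by (subst sum.swap) (simp add: mult.commute)

end

theorem mainTheorem7:
  fixes n m r :: nat and F :: "nat \<Rightarrow> jetfun"
  assumes "Suc m \<le> r"
    and "\<forall>i<r. smooth_jet n m (F i)"
  shows "(\<lambda>u. lead_bracket n m F u - multibracket n m F u)
           \<in> Jideal n m r F (int (\<Sum>i\<le>m. jet_order n m (F i)) - 1)"
proof -
  interpret jet_system n m r F using assms(2) by unfold_locales auto
  have "(\<lambda>u. lead_bracket n m F u - multibracket n m F u) =
    (\<lambda>u. (1 / fact m) * (\<Sum>\<zeta> | \<zeta> permutes {..<Suc m}. \<Sum>\<nu> | \<nu> permutes {..<m}.
       of_int (sign \<zeta> * sign \<nu>) * (chain_leading_term \<zeta> \<nu> 0 u - ell_chain \<zeta> \<nu> 0 u)))"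
    by (simp add: lead_bracket_eq multibracket_eq right_diff_distrib sum_subtractf)
  also have "\<dots> \<in> J (int (\<Sum>i\<le>m. jet_order n m (F i)) - 1)"
    using chain_leading_term_minus_ell_chain[OF assms(1)]
    by (intro Jideal_scale Jideal_sum) (auto intro: finite_permutations)
  finally show ?thesis .
qed

end
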